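(* Under the setting and hypotheses of the outer-loop iteration below (with $\epsilon\in(0,1/3)$), fix a target radius $R_k>R_\infty$ and a stopping threshold $$C_{stop}\ge\|\Sigma_g\|_{op}+\delta_\Sigma+(\delta_\mu+R_k)^2+\delta_T .$$ Consider the stopped procedure: at outer iteration $s$, stop and output $\bar w^{[s]}$ if $\gamma(\bar w^{[s]};\hat\mu^{[s]})\le C_{stop}$; otherwise set $\hat\mu^{[s+1]}=\sum_n\bar w^{[s]}_ng_n$ and continue. Then: (1) if $e^{[s]}\le R_k$ then $\gamma(\bar w^{[s]};\hat\mu^{[s]})\le C_{stop}$; consequently the procedure stops at some iteration $s\le s_{\max}:=1+\Big\lceil\frac{\log\big((e^{[1]}-R_\infty)_+/(R_k-R_\infty)\big)}{\log(1/\alpha_\epsilon)}\Big\rceil$ (with $s_{\max}:=1$ if $e^{[1]}\le R_\infty$); (2) if the procedure stops at iteration $s$, then $\big\|\sum_{n=1}^N\bar w^{[s]}_ng_n-\mu_g\big\|_2\le\delta_\mu+\alpha_\epsilon\sqrt{C_{stop}}$.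
   Context: Fix $N\ge1$, $p\ge2$, $\epsilon\in(0,1/3)$ and vectors $g_1,\dots,g_N\in\mathbb R^p$ with $\nu=\max_{i,j}\|g_i-g_j\|_2^2>0$; fix $T\ge4\max\{\log\frac1{1-\epsilon},\log p\}$ and $\delta_T=4\nu(\sqrt{\log(1/(1-\epsilon))/T}+\sqrt{\log p/T})$. For an index set $I$ and $\epsilon'\in[0,1)$, $\Delta_{I,\epsilon'}=\{w\in\mathbb R^I:\sum_{n\in I}w_n=1,0\le w_n\le\frac1{(1-\epsilon')|I|}\}$; $\Delta_{N,\epsilon}=\Delta_{[N],\epsilon}$. Density matrices $\mathfrak D_p=\{\rho\succeq0\text{ symmetric},\mathrm{Tr}\rho=1\}$. For $\hat\mu\in\mathbb R^p$: $S(w;\hat\mu)=\sum_nw_n(g_n-\hat\mu)(g_n-\hat\mu)^\top$, $\gamma(w;\hat\mu)=\|S(w;\hat\mu)\|_{op}$, $\mathrm{OPT}(\hat\mu)=\min_{w\in\Delta_{N,\epsilon}}\max_{\rho\in\mathfrak D_p}\mathrm{Tr}(S(w;\hat\mu)\rho)$. Inlier stability condition: a partition $[N]=I_{in}\sqcup I_{out}$ with $|I_{out}|\le\epsilon N$, $\mu_g\in\mathbb R^p$, symmetric PSD $\Sigma_g$, constants $\delta_\mu,\delta_\Sigma\ge0$ with, for every $w\in\Delta_{I_{in},\epsilon/(1-\epsilon)}$, $\|\sum_{n\in I_{in}}w_n(g_n-\mu_g)\|_2\le\delta_\mu$ and $\sum_{n\in I_{in}}w_n(g_n-\mu_g)(g_n-\mu_g)^\top\preceq\Sigma_g+\delta_\Sigma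 I$. Outer-loop iteration: $\hat\mu^{[1]}\in\operatorname{conv}\{g_n\}$; at iteration $s$ a weight vector $\bar w^{[s]}\in\Delta_{N,\epsilon}$ is produced with $\gamma(\bar w^{[s]};\hat\mu^{[s]})\le\mathrm{OPT}(\hat\mu^{[s]})+\delta_T$ (e.g. by MW–MMW rounds with uniform start and step sizes $\eta_w=\frac1\nu\sqrt{\log(1/(1-\epsilon))/T}$, $\eta_\rho=\frac1\nu\sqrt{\log p/T}$), and if not stopped $\hat\mu^{[s+1]}=\sum_n\bar w^{[s]}_ng_n$. Set $e^{[s]}=\|\hat\mu^{[s]}-\mu_g\|_2$, $\alpha_\epsilon=\sqrt{\epsilon/(1-2\epsilon)}$, $R_{\epsilon,T}=(1+\alpha_\epsilon)\delta_\mu+\alpha_\epsilon\sqrt{\|\Sigma_g\|_{op}+\delta_\Sigma+\delta_T}$, $R_\infty=R_{\epsilon,T}/(1-\alpha_\epsilon)$. *)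

theory Defs
  imports "HOL-Analysis.Analysis"
begin

text \<open>Vectors in R^p are elements of real^'p (p = CARD('p)); p x p matrices are real^'p^'p.
  Indices [N] are represented as {..<N}.  A weight vector w in R^I is a function
  nat => real that vanishes outside I.\<close>

definition capped_simplex :: "nat set \<Rightarrow> real \<Rightarrow> (nat \<Rightarrow> real) set" where
  "capped_simplex I e' = {w. (\<forall>n. n \<notin> I \<longrightarrow> w n = 0) \<and> (\<Sum>n\<in>I. w n) = 1 \<and>
      (\<forall>n\<in>I. 0 \<le> w n \<and> w n \<le> 1 / ((1 - e') * real (card I)))}"

definition outer :: "real^'p \<Rightarrow> real^'p^'p" where
  "outer v = (\<chi> i j. v $ i * v $ j)"

definition psd :: "real^'p^'p \<Rightarrow> bool" where
  "psd A \<longleftrightarrow> transpose A = A \<and> (\<forall>x. 0 \<le> x \<bullet> (A *v x))"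

definition loewner_le :: "real^'p^'p \<Rightarrow> real^'p^'p \<Rightarrow> bool" where
  "loewner_le A B \<longleftrightarrow> psd (B - A)"

definition density_matrices :: "(real^'p^'p) set" where
  "density_matrices = {\<rho>. psd \<rho> \<and> trace \<rho> = 1}"

definition opnorm :: "real^'p^'p \<Rightarrow> real" where
  "opnorm A = onorm (\<lambda>x. A *v x)"

definition Smat :: "nat \<Rightarrow> (nat \<Rightarrow> real^'p) \<Rightarrow> (nat \<Rightarrow> real) \<Rightarrow> real^'p \<Rightarrow> real^'p^'p" where
  "Smat N g w mu = (\<Sum>n<N. w n *\<^sub>R outer (g n - mu))"

definition gam :: "nat \<Rightarrow> (nat \<Rightarrow> real^'p) \<Rightarrow> (nat \<Rightarrow> real) \<Rightarrow> real^'p \<Rightarrow> real" where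
  "gam N g w mu = opnorm (Smat N g w mu)"

definition OPT :: "nat \<Rightarrow> real \<Rightarrow> (nat \<Rightarrow> real^'p) \<Rightarrow> real^'p \<Rightarrow> real" where
  "OPT N eps g mu = (INF w\<in>capped_simplex {..<N} eps.
       SUP \<rho>\<in>(density_matrices :: (real^'p^'p) set). trace (Smat N g w mu ** \<rho>))"

definition inlier_stable ::
  "nat \<Rightarrow> real \<Rightarrow> (nat \<Rightarrow> real^'p) \<Rightarrow> nat set \<Rightarrow> nat set \<Rightarrow> real^'p \<Rightarrow> real^'p^'p \<Rightarrow> real \<Rightarrow> real \<Rightarrow> bool" where
  "inlier_stable N eps g Iin Iout mug Sig dmu dSig \<longleftrightarrow>
     Iin \<union> Iout = {..<N} \<and> Iin \<inter> Iout = {} \<and> real (card Iout) \<le> eps * real N \<and>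
     psd Sig \<and> dmu \<ge> 0 \<and> dSig \<ge> 0 \<and>
     (\<forall>w\<in>capped_simplex Iin (eps / (1 - eps)).
        norm (\<Sum>n\<in>Iin. w n *\<^sub>R (g n - mug)) \<le> dmu \<and>
        loewner_le (\<Sum>n\<in>Iin. w n *\<^sub>R outer (g n - mug)) (Sig + dSig *\<^sub>R mat 1))"

definition alpha_eps :: "real \<Rightarrow> real" where
  "alpha_eps eps = sqrt (eps / (1 - 2 * eps))"

definition deltaT :: "real \<Rightarrow> real \<Rightarrow> nat \<Rightarrow> nat \<Rightarrow> real" where
  "deltaT nu eps p T = 4 * nu * (sqrt (ln (1 / (1 - eps)) / real T) + sqrt (ln (real p) / real T))"

definition R_epsT :: "real \<Rightarrow> real \<Rightarrow> real \<Rightarrow> real \<Rightarrow> real \<Rightarrow> real" where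
  "R_epsT eps dmu nSig dSig dT =
     (1 + alpha_eps eps) * dmu + alpha_eps eps * sqrt (nSig + dSig + dT)"

definition R_inf :: "real \<Rightarrow> real \<Rightarrow> real \<Rightarrow> real \<Rightarrow> real \<Rightarrow> real" where
  "R_inf eps dmu nSig dSig dT = R_epsT eps dmu nSig dSig dT / (1 - alpha_eps eps)"

text \<open>s_max; the ceiling is clamped at 0 so that s_max \<ge> 1.\<close>
definition s_max :: "real \<Rightarrow> real \<Rightarrow> real \<Rightarrow> real \<Rightarrow> int" where
  "s_max e1 Rinf Rk a =
     (if e1 \<le> Rinf then 1
      else 1 + max 0 \<lceil>ln ((e1 - Rinf) / (Rk - Rinf)) / ln (1 / a)\<rceil>)"

end

theory Submission
  imports Defs
begin

text \<open>
  For uniform weights on the inliers, S(w; mu) is the inlier second moment around mu, which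
  stability bounds by Sigma_g + delta_Sigma I plus a bias term of size (delta_mu + ||mu - mu_g||)^2;
  hence OPT(mu) is at most ||Sigma_g|| + delta_Sigma + (delta_mu + ||mu - mu_g||)^2.
  Conversely, for any w in the capped simplex the outliers carry at most eps/(1 - 2 eps) of the
  inlier weight, so in every unit direction Cauchy-Schwarz bounds the distance between the w-mean
  and the renormalised inlier mean by alpha_eps sqrt(gamma(w; mu)), while stability puts the
  renormalised inlier mean within delta_mu of mu_g.  Together these give
  e[s+1] - R_inf <= alpha_eps (e[s] - R_inf): the error contracts geometrically towards R_inf,
  falls below R_k within s_max - 1 steps, and from then on the first bound forces
  gamma <= C_stop.
\<close>

section \<open>Quadratic forms and positive semidefinite matrices\<close>

lemma inner_matrix_vector_mult_eq_sum:
  "(x::real^'n) \<bullet> (A *v y) = (\<Sum>j\<in>UNIV. \<Sum>k\<in>UNIV. x$j * A$j$k * y$k)"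
  by (simp add: inner_vec_def matrix_vector_mult_def sum_distrib_left mult.assoc)

lemma trace_matrix_mult_eq_sum:
  "trace ((A::real^'n^'n) ** B) = (\<Sum>i\<in>UNIV. \<Sum>k\<in>UNIV. A$i$k * B$k$i)"
  by (simp add: trace_def matrix_matrix_mult_def)

lemma outer_mult_vector: "outer v *v x = (v \<bullet> x) *\<^sub>R (v::real^'n)"
  by (simp add: outer_def matrix_vector_mult_def inner_vec_def vec_eq_iff sum_distrib_left
      mult.assoc mult.commute mult.left_commute)

lemma inner_outer_mult_vector: "(x::real^'n) \<bullet> (outer v *v x) = (v \<bullet> x)\<^sup>2"
  by (simp add: outer_mult_vector power2_eq_square inner_commute)

lemma transpose_outer: "transpose (outer (v::real^'n)) = outer v"
  by (simp add: outer_def transpose_def vec_eq_iff mult.commute)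

lemma trace_outer_mult: "trace (outer (v::real^'n) ** B) = v \<bullet> (B *v v)"
  unfolding trace_matrix_mult_eq_sum inner_matrix_vector_mult_eq_sum outer_def
  by (simp add: sum_distrib_left) (subst sum.swap, simp add: mult_ac)

lemma trace_outer: "trace (outer (v::real^'n)) = (norm v)\<^sup>2"
  by (simp add: trace_def outer_def power2_norm_eq_inner inner_vec_def)

lemma psd_outer: "psd (outer (v::real^'n))"
  by (simp add: psd_def transpose_outer inner_outer_mult_vector)

lemma outer_axis_in_density_matrices:
  "outer (axis i (1::real)) \<in> (density_matrices :: (real^'n^'n) set)"
  by (simp add: density_matrices_def psd_outer trace_outer)

lemma trace_add_matrix_mult: "trace (((A::real^'n^'n) + B) ** C) = trace (A ** C) + trace (B ** C)"
  by (simp add: trace_matrix_mult_eq_sum distrib_right sum.distrib)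

lemma trace_scaled_diff_matrix_mult:
  "trace ((c *\<^sub>R A - B) ** (C::real^'n^'n)) = c * trace (A ** C) - trace (B ** C)"
  by (simp add: trace_matrix_mult_eq_sum left_diff_distrib sum_subtractf sum_distrib_left mult.assoc)

lemma symmetric_matrix_entry_commute:
  assumes "transpose A = A"
  shows "A$j$k = A$k$j"
  using arg_cong[where f = "\<lambda>B. B$j$k", OF assms] by (simp add: transpose_def)

lemma symmetric_inner_matrix_vector_commute:
  assumes "transpose A = A"
  shows "(x::real^'n) \<bullet> (A *v y) = y \<bullet> (A *v x)"
  using symmetric_matrix_entry_commute[OF assms]
  unfolding inner_matrix_vector_mult_eq_sum by (subst sum.swap) (simp add: mult_ac)

lemma psd_diagonal_nonneg:
  assumes "psd A"
  shows "0 \<le> A$i$i"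
proof -
  have "0 \<le> axis i 1 \<bullet> (A *v axis i 1)" using assms by (simp add: psd_def)
  then show ?thesis by (simp add: inner_axis' matrix_vector_mult_basis column_def)
qed

lemma discriminant_le_of_quadratic_nonneg:
  fixes a b c :: real
  assumes "0 \<le> a" and "\<And>t. 0 \<le> a * t\<^sup>2 + 2 * b * t + c"
  shows "b\<^sup>2 \<le> a * c"
proof (cases "a = 0")
  case True
  have "b = 0"
  proof (rule ccontr)
    assume "b \<noteq> 0"
    have "0 \<le> a * (-(c + 1) / (2 * b))\<^sup>2 + 2 * b * (-(c + 1) / (2 * b)) + c" by (rule assms)
    also have "\<dots> = -1" using \<open>b \<noteq> 0\<close> True by (simp add: field_simps)
    finally show False by simp
  qed
  with True show ?thesis by simp
next
  case False
  have "0 \<le> a * (-b / a)\<^sup>2 + 2 * b * (-b / a) + c" by (rule assms)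
  also have "\<dots> = (a * c - b\<^sup>2) / a" using False by (simp add: field_simps power2_eq_square)
  finally show ?thesis using assms(1) False by (simp add: zero_le_divide_iff)
qed

lemma symmetric_quadratic_form_add_scaled:
  assumes "transpose A = A"
  shows "(x + t *\<^sub>R y) \<bullet> (A *v (x + t *\<^sub>R y)) =
     x \<bullet> (A *v x) + 2 * t * (y \<bullet> (A *v x)) + t\<^sup>2 * (y \<bullet> (A *v (y::real^'n)))"
  using symmetric_inner_matrix_vector_commute[OF assms, of x y]
  by (simp add: matrix_vector_right_distrib matrix_vector_mult_scaleR inner_add_left
      inner_add_right algebra_simps power2_eq_square)

lemma psd_matrix_vector_component_sq_le:
  assumes "psd A"
  shows "((A *v x) $ i)\<^sup>2 \<le> A$i$i * ((x::real^'n) \<bullet> (A *v x))"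
proof (rule discriminant_le_of_quadratic_nonneg)
  show "0 \<le> A$i$i" using assms by (rule psd_diagonal_nonneg)
next
  fix t
  define e :: "real^'n" where "e = axis i 1"
  have sym: "transpose A = A" and nonneg: "0 \<le> (x + t *\<^sub>R e) \<bullet> (A *v (x + t *\<^sub>R e))"
    using assms by (auto simp: psd_def)
  have "e \<bullet> (A *v x) = (A *v x) $ i" "e \<bullet> (A *v e) = A$i$i"
    by (simp_all add: e_def inner_axis' matrix_vector_mult_basis column_def)
  then show "0 \<le> A$i$i * t\<^sup>2 + 2 * (A *v x) $ i * t + x \<bullet> (A *v x)"
    using nonneg unfolding symmetric_quadratic_form_add_scaled[OF sym] by (simp add: algebra_simps)
qed

lemma psd_row_eq_0:
  assumes "psd A" "A$i$i = 0"
  shows "A$i = 0"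
proof -
  have "(A *v x) $ i = 0" for x
    using psd_matrix_vector_component_sq_le[OF assms(1), of x i] assms(2) by simp
  then have "A$i$j = 0" for j
    by (metis matrix_vector_mult_basis column_def vec_lambda_beta)
  then show ?thesis by (simp add: vec_eq_iff)
qed

lemma psd_diff_pivot_outer:
  fixes A :: "real^'n^'n"
  assumes psd: "psd A" and pivot: "0 < A$i$i"
  defines "v \<equiv> \<chi> j. A$j$i / sqrt (A$i$i)"
  shows "psd (A - outer v)" and "(A - outer v)$i = 0"
    and "\<And>j. A$j = 0 \<Longrightarrow> (A - outer v)$j = 0"
proof -
  have sym: "transpose A = A" using psd by (simp add: psd_def)
  then have A_sym: "A$j$l = A$l$j" for j l by (rule symmetric_matrix_entry_commute)
  have outer_v: "outer v $ j $ l = A$j$i * A$l$i / A$i$i" for j l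
    using pivot by (simp add: v_def outer_def power2_eq_square[symmetric] field_simps)
  have "(A - outer v)$i$l = 0" for l
    using pivot A_sym[of l i] by (simp add: outer_v)
  then show "(A - outer v)$i = 0" by (simp add: vec_eq_iff)
  show "(A - outer v)$j = 0" if "A$j = 0" for j
    using that by (simp add: vec_eq_iff outer_v)
  have "v \<bullet> x = (A *v x) $ i / sqrt (A$i$i)" for x
    by (simp add: v_def inner_vec_def matrix_vector_mult_def sum_divide_distrib) (metis A_sym)
  then have "(v \<bullet> x)\<^sup>2 \<le> x \<bullet> (A *v x)" for x
    using psd_matrix_vector_component_sq_le[OF psd, of x i] pivot
    by (simp add: power_divide divide_le_eq mult.commute)
  moreover have "transpose (A - outer v) = A - outer v"
    using sym transpose_outer[of v] by (simp add: transpose_def vec_eq_iff)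
  ultimately show "psd (A - outer v)"
    by (simp add: psd_def matrix_vector_mult_diff_rdistrib inner_diff_right inner_outer_mult_vector)
qed

lemma psd_trace_mult_nonneg:
  fixes A \<rho> :: "real^'n^'n"
  assumes "psd A" and "psd \<rho>"
  shows "0 \<le> trace (A ** \<rho>)"
proof -
  \<comment> \<open>Peel off one rank-one term per nonzero row, as in a Cholesky factorisation.\<close>
  have "\<forall>A::real^'n^'n. psd A \<longrightarrow> card {i. A$i \<noteq> 0} \<le> k \<longrightarrow> 0 \<le> trace (A ** \<rho>)" for k
  proof (induction k)
    case 0
    then show ?case by (auto simp: vec_eq_iff trace_matrix_mult_eq_sum)
  next
    case (Suc k)
    show ?case
    proof (intro allI impI)
      fix A :: "real^'n^'n"
      assume psd_A: "psd A" and rows: "card {i. A$i \<noteq> 0} \<le> Suc k"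
      show "0 \<le> trace (A ** \<rho>)"
      proof (cases "A = 0")
        case True
        then show ?thesis by (simp add: trace_def)
      next
        case False
        then obtain i where i: "A$i \<noteq> 0" by (metis vec_eq_iff zero_index)
        then have "0 < A$i$i"
          using psd_diagonal_nonneg[OF psd_A, of i] psd_row_eq_0[OF psd_A, of i] by fastforce
        note pivot = psd_diff_pivot_outer[OF psd_A this]
        define B where "B = A - outer (\<chi> j. A$j$i / sqrt (A$i$i))"
        have "{j. B$j \<noteq> 0} \<subset> {j. A$j \<noteq> 0}"
          using pivot(2,3) i unfolding B_def by blast
        then have "card {j. B$j \<noteq> 0} < card {j. A$j \<noteq> 0}"
          by (rule psubset_card_mono[rotated]) simp
        then have "card {j. B$j \<noteq> 0} \<le> k" using rows by simp
        then have "0 \<le> trace (B ** \<rho>)" using Suc.IH pivot(1) by (simp add: B_def)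
        moreover have "0 \<le> trace (outer (\<chi> j. A$j$i / sqrt (A$i$i)) ** \<rho>)"
          using \<open>psd \<rho>\<close> by (simp add: trace_outer_mult psd_def)
        ultimately show ?thesis
          using trace_add_matrix_mult[of B "outer (\<chi> j. A$j$i / sqrt (A$i$i))" \<rho>]
          by (simp add: B_def)
      qed
    qed
  qed
  then show ?thesis using assms(1) by blast
qed

lemma trace_mult_density_le_of_quadratic_form_le:
  fixes S :: "real^'n^'n"
  assumes "transpose S = S" and "\<And>x. x \<bullet> (S *v x) \<le> c * (norm x)\<^sup>2"
    and "\<rho> \<in> density_matrices"
  shows "trace (S ** \<rho>) \<le> c"
proof -
  have "transpose (c *\<^sub>R mat 1 - S) = c *\<^sub>R mat 1 - S"
    using assms(1) by (simp add: transpose_def vec_eq_iff mat_def)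
  moreover have "0 \<le> x \<bullet> ((c *\<^sub>R mat 1 - S) *v x)" for x
    using assms(2)[of x] by (simp add: matrix_vector_mult_diff_rdistrib inner_diff_right
        scaleR_matrix_vector_assoc[symmetric] power2_norm_eq_inner)
  ultimately have "psd (c *\<^sub>R mat 1 - S)" by (simp add: psd_def)
  then have "0 \<le> trace ((c *\<^sub>R mat 1 - S) ** \<rho>)"
    using assms(3) by (intro psd_trace_mult_nonneg) (simp_all add: density_matrices_def)
  then show ?thesis
    using assms(3) by (simp add: trace_scaled_diff_matrix_mult density_matrices_def)
qed

section \<open>An upper bound on the minimax value\<close>

lemma opnorm_nonneg: "0 \<le> opnorm S"
  unfolding opnorm_def by (rule onorm_pos_le) simp

lemma quadratic_form_le_opnorm: "x \<bullet> (S *v x) \<le> opnorm S * (norm x)\<^sup>2"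
proof -
  have "x \<bullet> (S *v x) \<le> norm x * norm (S *v x)" by (rule norm_cauchy_schwarz)
  also have "\<dots> \<le> norm x * (opnorm S * norm x)"
    unfolding opnorm_def by (rule mult_left_mono[OF onorm]) auto
  finally show ?thesis by (simp add: power2_eq_square mult_ac)
qed

lemma loewner_le_quadratic_form:
  assumes "loewner_le A B"
  shows "x \<bullet> (A *v x) \<le> x \<bullet> (B *v x)"
proof -
  have "0 \<le> x \<bullet> ((B - A) *v x)" using assms by (simp add: loewner_le_def psd_def)
  then show ?thesis by (simp add: matrix_vector_mult_diff_rdistrib inner_diff_right)
qed

lemma SUP_density_trace_le:
  fixes S :: "real^'n^'n"
  assumes "transpose S = S" and "\<And>x. x \<bullet> (S *v x) \<le> c * (norm x)\<^sup>2"
  shows "(SUP \<rho>\<in>density_matrices. trace (S ** \<rho>)) \<le> c"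
  using outer_axis_in_density_matrices
  by (intro cSUP_least trace_mult_density_le_of_quadratic_form_le assms) auto

lemma SUP_density_trace_nonneg:
  fixes S :: "real^'n^'n"
  assumes "psd S"
  shows "0 \<le> (SUP \<rho>\<in>density_matrices. trace (S ** \<rho>))"
proof -
  have "bdd_above ((\<lambda>\<rho>. trace (S ** \<rho>)) ` density_matrices)"
    using assms quadratic_form_le_opnorm
    by (intro bdd_aboveI2 trace_mult_density_le_of_quadratic_form_le) (auto simp: psd_def)
  then have "trace (S ** outer (axis i 1)) \<le> (SUP \<rho>\<in>density_matrices. trace (S ** \<rho>))" for i
    by (rule cSUP_upper[OF outer_axis_in_density_matrices])
  moreover have "0 \<le> trace (S ** outer (axis i 1))" for i
    by (rule psd_trace_mult_nonneg[OF assms psd_outer])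
  ultimately show ?thesis by (meson order_trans)
qed

lemma matrix_vector_mult_sum_left:
  "(\<Sum>n\<in>F. A n) *v x = (\<Sum>n\<in>F. A n *v (x::real^'n))"
  by (induction F rule: infinite_finite_induct) (simp_all add: matrix_vector_mult_add_rdistrib)

lemma quadratic_form_sum_outer:
  "x \<bullet> ((\<Sum>n\<in>F. w n *\<^sub>R outer (v n)) *v x) = (\<Sum>n\<in>F. w n * (v n \<bullet> (x::real^'n))\<^sup>2)"
  by (simp add: matrix_vector_mult_sum_left inner_sum_right scaleR_matrix_vector_assoc[symmetric]
      inner_outer_mult_vector)

lemma Smat_quadratic_form: "x \<bullet> (Smat N g w mu *v x) = (\<Sum>n<N. w n * ((g n - mu) \<bullet> x)\<^sup>2)"
  by (simp add: Smat_def quadratic_form_sum_outer)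

lemma transpose_Smat: "transpose (Smat N g w mu) = Smat N g w mu"
  by (simp add: Smat_def transpose_def vec_eq_iff outer_def sum_component mult.commute)

lemma psd_Smat:
  assumes "\<And>n. n < N \<Longrightarrow> 0 \<le> w n"
  shows "psd (Smat N g w mu)"
  unfolding psd_def Smat_quadratic_form using assms by (auto simp: transpose_Smat intro!: sum_nonneg)

lemma uniform_weights_in_capped_simplex:
  assumes "finite J" "I \<subseteq> J" "I \<noteq> {}" "e < 1" "(1 - e) * real (card J) \<le> real (card I)"
  shows "(\<lambda>n. if n \<in> I then 1 / real (card I) else 0) \<in> capped_simplex J e"
proof -
  have "finite I" "card I > 0" "card J > 0"
    using assms by (auto intro: finite_subset simp: card_gt_0_iff)
  then have "1 / real (card I) \<le> 1 / ((1 - e) * real (card J))"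
    using assms(4,5) by (intro divide_left_mono) auto
  moreover have "(\<Sum>n\<in>J. if n \<in> I then 1 / real (card I) else 0) = 1"
    using \<open>card I > 0\<close> assms(1,2) by (simp add: sum.If_cases Int_absorb1)
  ultimately show ?thesis
    using assms(2,4) \<open>card J > 0\<close> by (auto simp: capped_simplex_def)
qed

lemma inlier_stable_inliers:
  assumes "inlier_stable N eps g Iin Iout mug Sig dmu dSig"
  shows "finite Iin" "Iin \<subseteq> {..<N}" "(1 - eps) * real N \<le> real (card Iin)"
proof -
  have part: "Iin \<union> Iout = {..<N}" "Iin \<inter> Iout = {}" and "real (card Iout) \<le> eps * real N"
    using assms by (auto simp: inlier_stable_def)
  moreover have "finite Iin" "finite Iout" using part(1) by (metis finite_Un finite_lessThan)+
  ultimately have "card Iin + card Iout = N" using card_Un_disjoint by fastforce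
  then show "(1 - eps) * real N \<le> real (card Iin)"
    using \<open>real (card Iout) \<le> eps * real N\<close> by (simp add: algebra_simps flip: of_nat_add)
  show "finite Iin" "Iin \<subseteq> {..<N}" using \<open>finite Iin\<close> part(1) by auto
qed

lemma weighted_second_moment_shift_le:
  fixes w a :: "'a \<Rightarrow> real"
  assumes w1: "sum w F = 1" and second: "(\<Sum>n\<in>F. w n * (a n)\<^sup>2) \<le> s * X\<^sup>2"
    and first: "\<bar>\<Sum>n\<in>F. w n * a n\<bar> \<le> m * X" and d: "\<bar>d\<bar> \<le> e * X"
  shows "(\<Sum>n\<in>F. w n * (a n + d)\<^sup>2) \<le> (s + (m + e)\<^sup>2) * X\<^sup>2"
proof -
  have "(\<Sum>n\<in>F. w n * (a n + d)\<^sup>2)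
      = (\<Sum>n\<in>F. w n * (a n)\<^sup>2) + 2 * d * (\<Sum>n\<in>F. w n * a n) + d\<^sup>2 * sum w F"
    by (simp add: power2_eq_square algebra_simps sum.distrib sum_distrib_left)
  also have "\<dots> = (\<Sum>n\<in>F. w n * (a n)\<^sup>2) + 2 * d * (\<Sum>n\<in>F. w n * a n) + d\<^sup>2"
    by (simp add: w1)
  also have "\<dots> \<le> s * X\<^sup>2 + 2 * ((e * X) * (m * X)) + (e * X)\<^sup>2"
  proof -
    have "\<bar>d\<bar> * \<bar>\<Sum>n\<in>F. w n * a n\<bar> \<le> (e * X) * (m * X)"
      using first d by (intro mult_mono) auto
    then have "2 * d * (\<Sum>n\<in>F. w n * a n) \<le> 2 * ((e * X) * (m * X))"
      using abs_ge_self[of "d * (\<Sum>n\<in>F. w n * a n)"] by (simp add: abs_mult)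
    moreover have "d\<^sup>2 \<le> (e * X)\<^sup>2"
      using d by (metis abs_ge_zero power2_abs power_mono)
    ultimately show ?thesis using second by linarith
  qed
  also have "\<dots> \<le> s * X\<^sup>2 + 2 * ((e * X) * (m * X)) + (e * X)\<^sup>2 + (m * X)\<^sup>2"
    by simp
  also have "\<dots> = (s + (m + e)\<^sup>2) * X\<^sup>2"
    by (simp add: power2_eq_square algebra_simps)
  finally show ?thesis .
qed

lemma inlier_quadratic_form_le:
  assumes stab: "inlier_stable N eps g Iin Iout mug Sig dmu dSig"
    and w: "w \<in> capped_simplex Iin (eps / (1 - eps))"
  shows "(\<Sum>n\<in>Iin. w n * ((g n - mu) \<bullet> x)\<^sup>2)
      \<le> (opnorm Sig + dSig + (dmu + norm (mu - mug))\<^sup>2) * (norm x)\<^sup>2"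
proof -
  have mean: "norm (\<Sum>n\<in>Iin. w n *\<^sub>R (g n - mug)) \<le> dmu"
    and cov: "loewner_le (\<Sum>n\<in>Iin. w n *\<^sub>R outer (g n - mug)) (Sig + dSig *\<^sub>R mat 1)"
    using stab w by (auto simp: inlier_stable_def)
  have "(\<Sum>n\<in>Iin. w n * ((g n - mug) \<bullet> x)\<^sup>2)
      = x \<bullet> ((\<Sum>n\<in>Iin. w n *\<^sub>R outer (g n - mug)) *v x)"
    by (simp add: quadratic_form_sum_outer)
  also have "\<dots> \<le> x \<bullet> ((Sig + dSig *\<^sub>R mat 1) *v x)"
    by (rule loewner_le_quadratic_form[OF cov])
  also have "\<dots> = x \<bullet> (Sig *v x) + dSig * (norm x)\<^sup>2"
    by (simp add: matrix_vector_mult_add_rdistrib inner_add_right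
        scaleR_matrix_vector_assoc[symmetric] power2_norm_eq_inner)
  also have "\<dots> \<le> (opnorm Sig + dSig) * (norm x)\<^sup>2"
    using quadratic_form_le_opnorm[of x Sig] by (simp add: distrib_right)
  finally have second: "(\<Sum>n\<in>Iin. w n * ((g n - mug) \<bullet> x)\<^sup>2) \<le> (opnorm Sig + dSig) * (norm x)\<^sup>2" .
  have "(\<Sum>n\<in>Iin. w n * ((g n - mug) \<bullet> x)) = (\<Sum>n\<in>Iin. w n *\<^sub>R (g n - mug)) \<bullet> x"
    by (simp add: inner_sum_left)
  then have "\<bar>\<Sum>n\<in>Iin. w n * ((g n - mug) \<bullet> x)\<bar> \<le> norm (\<Sum>n\<in>Iin. w n *\<^sub>R (g n - mug)) * norm x"
    by (simp add: Cauchy_Schwarz_ineq2)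
  also have "\<dots> \<le> dmu * norm x" by (rule mult_right_mono[OF mean norm_ge_zero])
  finally have first: "\<bar>\<Sum>n\<in>Iin. w n * ((g n - mug) \<bullet> x)\<bar> \<le> dmu * norm x" .
  have "\<bar>(mug - mu) \<bullet> x\<bar> \<le> norm (mu - mug) * norm x"
    using Cauchy_Schwarz_ineq2[of "mug - mu" x] by (simp add: norm_minus_commute)
  from weighted_second_moment_shift_le[OF _ second first this] w
  show ?thesis by (simp add: capped_simplex_def inner_diff_left)
qed

lemma OPT_le_SUP_density_trace:
  assumes "w \<in> capped_simplex {..<N} eps"
  shows "OPT N eps g mu \<le> (SUP \<rho>\<in>density_matrices. trace (Smat N g w mu ** \<rho>))"
  unfolding OPT_def
proof (rule cINF_lower[OF _ assms])
  show "bdd_below ((\<lambda>w. SUP \<rho>\<in>density_matrices. trace (Smat N g w mu ** \<rho>))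
      ` capped_simplex {..<N} eps)"
    by (intro bdd_belowI2[where m = 0] SUP_density_trace_nonneg psd_Smat)
      (auto simp: capped_simplex_def)
qed

lemma OPT_le_stability_bound:
  assumes stab: "inlier_stable N eps g Iin Iout mug Sig dmu dSig"
    and eps: "0 \<le> eps" "eps < 1/2" and N: "0 < N"
  shows "OPT N eps g mu \<le> opnorm Sig + dSig + (dmu + norm (mu - mug))\<^sup>2"
proof -
  note inliers = inlier_stable_inliers[OF stab]
  have "0 < (1 - eps) * real N" using eps N by simp
  then have "Iin \<noteq> {}" using inliers(3) by auto
  define ws where "ws n = (if n \<in> Iin then 1 / real (card Iin) else 0)" for n
  have ws_N: "ws \<in> capped_simplex {..<N} eps"
    unfolding ws_def using inliers \<open>Iin \<noteq> {}\<close> eps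
    by (intro uniform_weights_in_capped_simplex) auto
  have "eps / (1 - eps) < 1" "0 \<le> eps / (1 - eps)" using eps by (auto simp: field_simps)
  moreover have "(1 - eps / (1 - eps)) * real (card Iin) \<le> real (card Iin)"
    using \<open>eps / (1 - eps) < 1\<close> \<open>0 \<le> eps / (1 - eps)\<close> by (intro mult_left_le_one_le) auto
  ultimately have ws_in: "ws \<in> capped_simplex Iin (eps / (1 - eps))"
    unfolding ws_def using inliers \<open>Iin \<noteq> {}\<close>
    by (intro uniform_weights_in_capped_simplex) auto
  have "x \<bullet> (Smat N g ws mu *v x)
      \<le> (opnorm Sig + dSig + (dmu + norm (mu - mug))\<^sup>2) * (norm x)\<^sup>2" for x
  proof -
    have "(\<Sum>n<N. ws n * ((g n - mu) \<bullet> x)\<^sup>2) = (\<Sum>n\<in>Iin. ws n * ((g n - mu) \<bullet> x)\<^sup>2)"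
      using inliers(2) by (intro sum.mono_neutral_right) (auto simp: ws_def)
    then show ?thesis
      using inlier_quadratic_form_le[OF stab ws_in] by (simp add: Smat_quadratic_form)
  qed
  then have "(SUP \<rho>\<in>density_matrices. trace (Smat N g ws mu ** \<rho>))
      \<le> opnorm Sig + dSig + (dmu + norm (mu - mug))\<^sup>2"
    by (intro SUP_density_trace_le transpose_Smat)
  moreover have "OPT N eps g mu \<le> (SUP \<rho>\<in>density_matrices. trace (Smat N g ws mu ** \<rho>))"
    by (rule OPT_le_SUP_density_trace[OF ws_N])
  ultimately show ?thesis by linarith
qed

section \<open>Resilience of weighted means\<close>

lemma norm_le_if_unit_inner_le:
  fixes v :: "'a::euclidean_space"
  assumes "\<And>x. norm x = 1 \<Longrightarrow> x \<bullet> v \<le> B"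
  shows "norm v \<le> B"
proof (cases "v = 0")
  case True
  obtain b :: 'a where "b \<in> Basis" using nonempty_Basis by blast
  then show ?thesis using assms[of b] True by simp
next
  case False
  then have "sgn v \<bullet> v = norm v"
    by (simp add: sgn_div_norm dot_square_norm power2_eq_square)
  then show ?thesis using assms[of "sgn v"] False by (simp add: norm_sgn)
qed

lemma Cauchy_Schwarz_weighted_sum:
  fixes w z :: "'a \<Rightarrow> real"
  assumes "\<And>i. i \<in> F \<Longrightarrow> 0 \<le> w i"
  shows "(\<Sum>i\<in>F. w i * z i)\<^sup>2 \<le> (\<Sum>i\<in>F. w i) * (\<Sum>i\<in>F. w i * (z i)\<^sup>2)"
proof -
  have "(\<Sum>i\<in>F. sqrt (w i) * (sqrt (w i) * z i))\<^sup>2 \<le>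
        (\<Sum>i\<in>F. (sqrt (w i))\<^sup>2) * (\<Sum>i\<in>F. (sqrt (w i) * z i)\<^sup>2)"
    by (rule Cauchy_Schwarz_ineq_sum)
  moreover have "(\<Sum>i\<in>F. sqrt (w i) * (sqrt (w i) * z i)) = (\<Sum>i\<in>F. w i * z i)"
    using assms by (intro sum.cong) (auto simp: mult.assoc[symmetric])
  moreover have "(\<Sum>i\<in>F. (sqrt (w i))\<^sup>2) = (\<Sum>i\<in>F. w i)"
    using assms by (intro sum.cong) auto
  moreover have "(\<Sum>i\<in>F. (sqrt (w i) * z i)\<^sup>2) = (\<Sum>i\<in>F. w i * (z i)\<^sup>2)"
    using assms by (intro sum.cong) (auto simp: power_mult_distrib)
  ultimately show ?thesis by simp
qed

lemma weighted_variance_le: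
  fixes w y :: "'a \<Rightarrow> real"
  assumes "sum w F = 1"
  shows "(\<Sum>n\<in>F. w n * (y n - (\<Sum>k\<in>F. w k * y k))\<^sup>2) \<le> (\<Sum>n\<in>F. w n * (y n - c)\<^sup>2)"
proof -
  define M where "M = (\<Sum>k\<in>F. w k * y k)"
  have "w n * (y n - c)\<^sup>2 = w n * (y n - M)\<^sup>2 + 2 * (M - c) * (w n * y n) - 2 * (M - c) * M * w n
      + (M - c)\<^sup>2 * w n" for n
    by (simp add: power2_eq_square algebra_simps)
  then have "(\<Sum>n\<in>F. w n * (y n - c)\<^sup>2) = (\<Sum>n\<in>F. w n * (y n - M)\<^sup>2) + 2 * (M - c) * M
      - 2 * (M - c) * M * sum w F + (M - c)\<^sup>2 * sum w F"
    by (simp add: sum.distrib sum_subtractf sum_distrib_left M_def)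
  then show ?thesis using assms by (simp add: M_def)
qed

lemma subset_weighted_deviation_sq_le:
  fixes w y :: "'a \<Rightarrow> real"
  assumes fin: "finite A" "finite B" and disj: "A \<inter> B = {}"
    and w: "\<And>n. n \<in> A \<union> B \<Longrightarrow> 0 \<le> w n" and w1: "sum w (A \<union> B) = 1"
  defines "M \<equiv> (\<Sum>n\<in>A \<union> B. w n * y n)"
  shows "(\<Sum>n\<in>A. w n * (y n - M))\<^sup>2 \<le> sum w A * sum w B * (\<Sum>n\<in>A \<union> B. w n * (y n - M)\<^sup>2)"
proof -
  define a where "a = (\<Sum>n\<in>B. w n * (y n - M))"
  have split: "sum f (A \<union> B) = sum f A + sum f B" for f :: "'a \<Rightarrow> real"
    by (rule sum.union_disjoint[OF fin disj])
  have "(\<Sum>n\<in>A \<union> B. w n * (y n - M)) = (\<Sum>n\<in>A \<union> B. w n * y n) - sum w (A \<union> B) * M"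
    by (simp add: right_diff_distrib sum_subtractf sum_distrib_right)
  then have "(\<Sum>n\<in>A \<union> B. w n * (y n - M)) = 0" using w1 by (simp add: M_def)
  then have sum_A: "(\<Sum>n\<in>A. w n * (y n - M)) = - a"
    using w1 split[of "\<lambda>n. w n * (y n - M)"] by (simp add: a_def)
  have "a\<^sup>2 \<le> sum w B * (\<Sum>n\<in>B. w n * (y n - M)\<^sup>2)"
    unfolding a_def using w by (intro Cauchy_Schwarz_weighted_sum) auto
  moreover have "a\<^sup>2 \<le> sum w A * (\<Sum>n\<in>A. w n * (y n - M)\<^sup>2)"
    using Cauchy_Schwarz_weighted_sum[of A w "\<lambda>n. y n - M"] w sum_A by simp
  moreover have "0 \<le> sum w A" "0 \<le> sum w B" using w by (auto intro: sum_nonneg)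
  ultimately have "sum w A * a\<^sup>2 + sum w B * a\<^sup>2
      \<le> sum w A * (sum w B * (\<Sum>n\<in>B. w n * (y n - M)\<^sup>2))
        + sum w B * (sum w A * (\<Sum>n\<in>A. w n * (y n - M)\<^sup>2))"
    by (intro add_mono mult_left_mono)
  moreover have "sum w A * a\<^sup>2 + sum w B * a\<^sup>2 = a\<^sup>2"
    using w1 split[of w] by (simp flip: distrib_right)
  ultimately show ?thesis
    using sum_A split[of "\<lambda>n. w n * (y n - M)\<^sup>2"] by (simp add: algebra_simps)
qed

lemma outlier_weight_le:
  assumes w: "w \<in> capped_simplex {..<N} eps" and eps: "eps < 1"
    and Iout: "Iout \<subseteq> {..<N}" "real (card Iout) \<le> eps * real N"
  shows "(1 - eps) * sum w Iout \<le> eps"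
proof -
  have "0 < N" using w by (auto simp: capped_simplex_def intro: Nat.gr0I)
  have "sum w Iout \<le> real (card Iout) * (1 / ((1 - eps) * real N))"
    using w Iout(1) by (intro sum_bounded_above) (auto simp: capped_simplex_def)
  then have "(1 - eps) * sum w Iout \<le> real (card Iout) / real N"
    using eps \<open>0 < N\<close> by (simp add: field_simps)
  also have "\<dots> \<le> eps" using Iout(2) \<open>0 < N\<close> by (simp add: divide_le_eq)
  finally show ?thesis .
qed

lemma inlier_weight_bounds:
  assumes w: "w \<in> capped_simplex {..<N} eps" and eps: "eps < 1/2"
    and part: "Iin \<union> Iout = {..<N}" "Iin \<inter> Iout = {}"
    and card: "real (card Iout) \<le> eps * real N"
  shows "0 < sum w Iin" and "(1 - 2 * eps) * sum w Iout \<le> eps * sum w Iin"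
proof -
  have "finite Iin" "finite Iout" using part(1) by (metis finite_Un finite_lessThan)+
  then have "sum w Iin + sum w Iout = 1"
    using w part by (simp add: capped_simplex_def flip: sum.union_disjoint)
  moreover have outliers: "(1 - eps) * sum w Iout \<le> eps"
    using outlier_weight_le[OF w _ _ card] eps part(1) by auto
  moreover have "sum w Iout < 1"
  proof (rule ccontr)
    assume "\<not> sum w Iout < 1"
    then have "1 - eps \<le> (1 - eps) * sum w Iout"
      using eps mult_left_mono[of 1 "sum w Iout" "1 - eps"] by simp
    then show False using outliers eps by linarith
  qed
  ultimately show "0 < sum w Iin" by linarith
  have "eps * sum w Iin = eps - eps * sum w Iout"
    using \<open>sum w Iin + sum w Iout = 1\<close> by (simp flip: distrib_left add: algebra_simps)
  moreover have "(1 - 2 * eps) * sum w Iout = (1 - eps) * sum w Iout - eps * sum w Iout"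
    by (simp add: algebra_simps)
  ultimately show "(1 - 2 * eps) * sum w Iout \<le> eps * sum w Iin"
    using outliers by linarith
qed

lemma renormalized_cap_le:
  fixes eps I k n :: real
  assumes eps: "0 \<le> eps" "eps < 1/2" and n: "n = I + k" "0 < n" and k: "k \<le> eps * n"
  shows "(1 - 2 * eps) * I / ((1 - eps) * n) \<le> (1 - eps) * (1 - k / ((1 - eps) * n))"
proof -
  have pos: "0 < (1 - eps) * n" using eps n by simp
  have "(1 - eps) * ((1 - eps) * n - k) - (1 - 2 * eps) * I = eps * (eps * n - k)"
    by (simp add: n(1) algebra_simps)
  moreover have "0 \<le> eps * (eps * n - k)" using k eps by simp
  ultimately have "(1 - 2 * eps) * I \<le> (1 - eps) * ((1 - eps) * n - k)" by linarith
  then have "(1 - 2 * eps) * I / ((1 - eps) * n) \<le> (1 - eps) * ((1 - eps) * n - k) / ((1 - eps) * n)"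
    by (rule divide_right_mono) (use pos in simp)
  also have "\<dots> = (1 - eps) * (((1 - eps) * n - k) / ((1 - eps) * n))"
    by simp
  also have "\<dots> = (1 - eps) * (1 - k / ((1 - eps) * n))"
    using n(2) by (simp add: diff_divide_distrib)
  finally show ?thesis .
qed

lemma renormalized_inlier_weights_in_capped_simplex:
  assumes w: "w \<in> capped_simplex {..<N} eps" and eps: "0 \<le> eps" "eps < 1/2"
    and part: "Iin \<union> Iout = {..<N}" "Iin \<inter> Iout = {}"
    and card: "real (card Iout) \<le> eps * real N"
  shows "(\<lambda>n. if n \<in> Iin then w n / sum w Iin else 0) \<in> capped_simplex Iin (eps / (1 - eps))"
proof -
  define W where "W = sum w Iin"
  define B where "B = 1 / ((1 - eps) * real N)"
  define k where "k = real (card Iout)"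
  define I where "I = real (card Iin)"
  have "0 < W" using inlier_weight_bounds(1)[OF w _ part card] eps by (simp add: W_def)
  have "0 < N" using w by (auto simp: capped_simplex_def intro: Nat.gr0I)
  have "finite Iin" "finite Iout" using part(1) by (metis finite_Un finite_lessThan)+
  then have N_eq: "real N = I + k"
    using part by (simp add: I_def k_def flip: card_Un_disjoint of_nat_add)
  have cap: "w n \<le> B" if "n \<in> Iin" for n
    using w that part(1) by (auto simp: capped_simplex_def B_def)
  have "sum w Iout \<le> k * B"
    using w part(1) by (intro sum_bounded_above[of Iout w B, simplified k_def[symmetric]])
      (auto simp: capped_simplex_def B_def)
  moreover have "sum w Iin + sum w Iout = 1"
    using w part \<open>finite Iin\<close> \<open>finite Iout\<close>
    by (simp add: capped_simplex_def flip: sum.union_disjoint)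
  ultimately have W_ge: "1 - k * B \<le> W" by (simp add: W_def)
  have "(1 - eps) * real N \<le> I" using card N_eq by (simp add: k_def algebra_simps)
  moreover have "0 < (1 - eps) * real N" using eps \<open>0 < N\<close> by simp
  ultimately have "0 < I" by linarith
  have "w n / W \<le> 1 / ((1 - eps / (1 - eps)) * I)" if "n \<in> Iin" for n
  proof -
    have "w n * ((1 - 2 * eps) * I) \<le> (1 - 2 * eps) * I * B"
      using cap[OF that] eps \<open>0 < I\<close> by (simp add: mult_right_mono mult.commute)
    also have "\<dots> \<le> (1 - eps) * (1 - k * B)"
      using renormalized_cap_le[OF eps N_eq] \<open>0 < N\<close> card by (simp add: B_def k_def)
    also have "\<dots> \<le> (1 - eps) * W" using W_ge eps by (intro mult_left_mono) auto
    finally show ?thesis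
      using \<open>0 < W\<close> \<open>0 < I\<close> eps by (simp add: field_simps)
  qed
  moreover have "(\<Sum>n\<in>Iin. w n / W) = 1"
    using \<open>0 < W\<close> by (simp add: W_def flip: sum_divide_distrib)
  moreover have "0 \<le> w n / W" if "n \<in> Iin" for n
  proof -
    have "n \<in> {..<N}" using that part(1) by blast
    then show ?thesis using w \<open>0 < W\<close> by (simp add: capped_simplex_def)
  qed
  ultimately show ?thesis by (auto simp: capped_simplex_def W_def I_def)
qed

lemma inlier_mean_deviation_sq_le:
  fixes y :: "nat \<Rightarrow> real"
  assumes w: "w \<in> capped_simplex {..<N} eps" and eps: "0 \<le> eps" "eps < 1/2"
    and part: "Iin \<union> Iout = {..<N}" "Iin \<inter> Iout = {}"
    and card: "real (card Iout) \<le> eps * real N"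
  shows "((\<Sum>n\<in>Iin. w n * y n) / sum w Iin - (\<Sum>n<N. w n * y n))\<^sup>2
      \<le> eps / (1 - 2 * eps) * (\<Sum>n<N. w n * (y n - c)\<^sup>2)"
proof -
  define M where "M = (\<Sum>n<N. w n * y n)"
  define V where "V = (\<Sum>n<N. w n * (y n - M)\<^sup>2)"
  define W where "W = sum w Iin"
  have "0 < W" and ratio: "(1 - 2 * eps) * sum w Iout \<le> eps * W"
    using inlier_weight_bounds[OF w eps(2) part card] by (simp_all add: W_def)
  have fin: "finite Iin" "finite Iout" using part(1) by (metis finite_Un finite_lessThan)+
  have w_nonneg: "0 \<le> w n" if "n \<in> Iin \<union> Iout" for n
    using w that part(1) by (auto simp: capped_simplex_def)
  have w1: "sum w (Iin \<union> Iout) = 1" using w part(1) by (simp add: capped_simplex_def)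
  have "0 \<le> V" unfolding V_def using w_nonneg part(1) by (auto intro: sum_nonneg)
  have "(\<Sum>n\<in>Iin. w n * (y n - M)) = (\<Sum>n\<in>Iin. w n * y n) - W * M"
    by (simp add: right_diff_distrib sum_subtractf sum_distrib_right W_def)
  also have "\<dots> = W * ((\<Sum>n\<in>Iin. w n * y n) / W - M)"
    using \<open>0 < W\<close> by (simp add: right_diff_distrib)
  finally have "W\<^sup>2 * ((\<Sum>n\<in>Iin. w n * y n) / W - M)\<^sup>2 \<le> W * sum w Iout * V"
    using subset_weighted_deviation_sq_le[OF fin part(2) w_nonneg w1, of y]
    by (simp add: part(1) M_def V_def W_def power_mult_distrib)
  then have "W * ((\<Sum>n\<in>Iin. w n * y n) / W - M)\<^sup>2 \<le> sum w Iout * V"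
    using \<open>0 < W\<close> by (simp add: power2_eq_square mult.assoc)
  also have "\<dots> \<le> eps / (1 - 2 * eps) * W * V"
    using ratio eps \<open>0 \<le> V\<close> by (intro mult_right_mono) (simp_all add: field_simps)
  also have "\<dots> = W * (eps / (1 - 2 * eps) * V)" by (simp add: mult_ac)
  finally have "((\<Sum>n\<in>Iin. w n * y n) / W - M)\<^sup>2 \<le> eps / (1 - 2 * eps) * V"
    using mult_le_cancel_left_pos[OF \<open>0 < W\<close>] by blast
  also have "\<dots> \<le> eps / (1 - 2 * eps) * (\<Sum>n<N. w n * (y n - c)\<^sup>2)"
    using w eps unfolding V_def M_def
    by (intro mult_left_mono weighted_variance_le) (auto simp: capped_simplex_def)
  finally show ?thesis by (simp add: M_def W_def)
qed

lemma inlier_weighted_mean_near_mug: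
  fixes g :: "nat \<Rightarrow> real^'p"
  assumes stab: "inlier_stable N eps g Iin Iout mug Sig dmu dSig"
    and eps: "0 \<le> eps" "eps < 1/2" and w: "w \<in> capped_simplex {..<N} eps"
  shows "norm ((\<Sum>n\<in>Iin. w n *\<^sub>R g n) /\<^sub>R sum w Iin - mug) \<le> dmu"
proof -
  define W where "W = sum w Iin"
  have part: "Iin \<union> Iout = {..<N}" "Iin \<inter> Iout = {}"
    and card: "real (card Iout) \<le> eps * real N"
    using stab by (auto simp: inlier_stable_def)
  have "0 < W" using inlier_weight_bounds(1)[OF w eps(2) part card] by (simp add: W_def)
  define w' where "w' n = (if n \<in> Iin then w n / W else 0)" for n
  have "w' \<in> capped_simplex Iin (eps / (1 - eps))"
    unfolding w'_def W_def by (rule renormalized_inlier_weights_in_capped_simplex[OF w eps part card])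
  then have "norm (\<Sum>n\<in>Iin. w' n *\<^sub>R (g n - mug)) \<le> dmu"
    using stab by (auto simp: inlier_stable_def)
  moreover have "(\<Sum>n\<in>Iin. w' n *\<^sub>R (g n - mug)) = (\<Sum>n\<in>Iin. w n *\<^sub>R g n) /\<^sub>R W - mug"
  proof -
    have "(\<Sum>n\<in>Iin. w' n *\<^sub>R mug) = (\<Sum>n\<in>Iin. w n / W) *\<^sub>R mug"
      by (simp add: w'_def scaleR_sum_left)
    also have "\<dots> = mug" using \<open>0 < W\<close> by (simp add: W_def flip: sum_divide_distrib)
    finally show ?thesis
      by (simp add: w'_def scaleR_diff_right sum_subtractf scaleR_sum_right divide_inverse_commute)
  qed
  ultimately show ?thesis by (simp add: W_def)
qed

lemma weighted_mean_near_inlier_mean: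
  fixes g :: "nat \<Rightarrow> real^'p"
  assumes stab: "inlier_stable N eps g Iin Iout mug Sig dmu dSig"
    and eps: "0 \<le> eps" "eps < 1/2" and w: "w \<in> capped_simplex {..<N} eps"
  shows "norm ((\<Sum>n<N. w n *\<^sub>R g n) - (\<Sum>n\<in>Iin. w n *\<^sub>R g n) /\<^sub>R sum w Iin)
      \<le> alpha_eps eps * sqrt (gam N g w mu)"
proof (rule norm_le_if_unit_inner_le)
  fix x :: "real^'p"
  assume x: "norm x = 1"
  define y where "y n = x \<bullet> g n" for n
  have part: "Iin \<union> Iout = {..<N}" "Iin \<inter> Iout = {}"
    and card: "real (card Iout) \<le> eps * real N"
    using stab by (auto simp: inlier_stable_def)
  have "(g n - mu) \<bullet> x = y n - x \<bullet> mu" for n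
    by (simp add: y_def inner_diff_right inner_commute[of _ x])
  then have "(\<Sum>n<N. w n * (y n - x \<bullet> mu)\<^sup>2) = x \<bullet> (Smat N g w mu *v x)"
    by (simp add: Smat_quadratic_form)
  also have "\<dots> \<le> gam N g w mu"
    using quadratic_form_le_opnorm[of x "Smat N g w mu"] x by (simp add: gam_def)
  finally have variance: "(\<Sum>n<N. w n * (y n - x \<bullet> mu)\<^sup>2) \<le> gam N g w mu" .
  have "((\<Sum>n\<in>Iin. w n * y n) / sum w Iin - (\<Sum>n<N. w n * y n))\<^sup>2
      \<le> eps / (1 - 2 * eps) * (\<Sum>n<N. w n * (y n - x \<bullet> mu)\<^sup>2)"
    by (rule inlier_mean_deviation_sq_le[OF w eps part card])
  also have "\<dots> \<le> eps / (1 - 2 * eps) * gam N g w mu"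
    using variance eps by (intro mult_left_mono) auto
  finally have "(\<Sum>n<N. w n * y n) - (\<Sum>n\<in>Iin. w n * y n) / sum w Iin
      \<le> alpha_eps eps * sqrt (gam N g w mu)"
    by (simp add: alpha_eps_def power2_commute real_le_rsqrt flip: real_sqrt_mult)
  then show "x \<bullet> ((\<Sum>n<N. w n *\<^sub>R g n) - (\<Sum>n\<in>Iin. w n *\<^sub>R g n) /\<^sub>R sum w Iin)
      \<le> alpha_eps eps * sqrt (gam N g w mu)"
    by (simp add: inner_diff_right inner_sum_right y_def divide_inverse_commute)
qed

lemma weighted_mean_error_le:
  fixes g :: "nat \<Rightarrow> real^'p"
  assumes stab: "inlier_stable N eps g Iin Iout mug Sig dmu dSig"
    and eps: "0 \<le> eps" "eps < 1/2" and w: "w \<in> capped_simplex {..<N} eps"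
  shows "norm ((\<Sum>n<N. w n *\<^sub>R g n) - mug) \<le> dmu + alpha_eps eps * sqrt (gam N g w mu)"
  using norm_triangle_ineq[of "(\<Sum>n<N. w n *\<^sub>R g n) - (\<Sum>n\<in>Iin. w n *\<^sub>R g n) /\<^sub>R sum w Iin"
      "(\<Sum>n\<in>Iin. w n *\<^sub>R g n) /\<^sub>R sum w Iin - mug"]
    weighted_mean_near_inlier_mean[OF assms, where mu = mu] inlier_weighted_mean_near_mug[OF assms]
  by simp

section \<open>Geometric contraction of the outer loop\<close>

lemma alpha_eps_pos: "0 < eps \<Longrightarrow> eps < 1/2 \<Longrightarrow> 0 < alpha_eps eps"
  by (simp add: alpha_eps_def)

lemma alpha_eps_less_1: "0 \<le> eps \<Longrightarrow> eps < 1/3 \<Longrightarrow> alpha_eps eps < 1"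
  by (simp add: alpha_eps_def divide_less_eq)

lemma deltaT_nonneg: "0 \<le> nu \<Longrightarrow> 0 \<le> eps \<Longrightarrow> eps < 1 \<Longrightarrow> 1 \<le> p \<Longrightarrow> 0 \<le> deltaT nu eps p T"
  by (simp add: deltaT_def)

lemma R_inf_contraction:
  assumes "0 \<le> alpha_eps eps" "alpha_eps eps < 1" "0 \<le> dmu" "0 \<le> nSig + dSig + dT" "0 \<le> e"
  shows "dmu + alpha_eps eps * sqrt (nSig + dSig + dT + (dmu + e)\<^sup>2) - R_inf eps dmu nSig dSig dT
      \<le> alpha_eps eps * (e - R_inf eps dmu nSig dSig dT)"
proof -
  have "sqrt (nSig + dSig + dT + (dmu + e)\<^sup>2) \<le> sqrt (nSig + dSig + dT) + sqrt ((dmu + e)\<^sup>2)"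
    using assms by (intro sqrt_add_le_add_sqrt) auto
  also have "\<dots> = sqrt (nSig + dSig + dT) + (dmu + e)" using assms by simp
  finally have "alpha_eps eps * sqrt (nSig + dSig + dT + (dmu + e)\<^sup>2)
      \<le> alpha_eps eps * (sqrt (nSig + dSig + dT) + (dmu + e))"
    by (rule mult_left_mono) (use assms in simp)
  then have "dmu + alpha_eps eps * sqrt (nSig + dSig + dT + (dmu + e)\<^sup>2)
      \<le> R_epsT eps dmu nSig dSig dT + alpha_eps eps * e"
    by (simp add: R_epsT_def algebra_simps)
  moreover have "R_epsT eps dmu nSig dSig dT = (1 - alpha_eps eps) * R_inf eps dmu nSig dSig dT"
    using assms(2) by (simp add: R_inf_def)
  ultimately show ?thesis by (simp add: algebra_simps)
qed

lemma affine_contraction_iterate: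
  fixes e :: "nat \<Rightarrow> real"
  assumes "0 \<le> a" and "\<And>j. j < k \<Longrightarrow> e (Suc (s + j)) - c \<le> a * (e (s + j) - c)"
  shows "e (s + k) - c \<le> a ^ k * (e s - c)"
  using assms(2)
proof (induction k)
  case 0
  then show ?case by simp
next
  case (Suc k)
  have "e (s + Suc k) - c \<le> a * (e (s + k) - c)" using Suc.prems[of k] by simp
  also have "\<dots> \<le> a * (a ^ k * (e s - c))"
    using Suc.IH Suc.prems assms(1) by (intro mult_left_mono) auto
  finally show ?case by simp
qed

lemma power_le_of_log_ratio_le:
  fixes a r :: real
  assumes "0 < a" "a < 1" "0 < r" "ln r / ln (1 / a) \<le> real K"
  shows "a ^ K * r \<le> 1"
proof -
  have "0 < ln (1 / a)" using assms(1,2) by simp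
  then have "ln r \<le> real K * ln (1 / a)" using assms(4) by (simp add: divide_le_eq)
  then have "ln (a ^ K * r) \<le> 0"
    using assms(1,3) by (simp add: ln_mult ln_realpow ln_div)
  then show ?thesis using assms(1,3) by simp
qed

lemma stopping_time_le_s_max:
  fixes e :: "nat \<Rightarrow> real" and stopped :: "nat \<Rightarrow> bool"
  assumes a: "0 < a" "a < 1" and Rk: "Rinf < Rk"
    and stop: "\<And>s. 1 \<le> s \<Longrightarrow> (\<forall>t. 1 \<le> t \<and> t < s \<longrightarrow> \<not> stopped t) \<Longrightarrow> e s \<le> Rk \<Longrightarrow> stopped s"
    and contract: "\<And>s. 1 \<le> s \<Longrightarrow> (\<forall>t. 1 \<le> t \<and> t \<le> s \<longrightarrow> \<not> stopped t) \<Longrightarrow>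
        e (Suc s) - Rinf \<le> a * (e s - Rinf)"
  shows "\<exists>s\<ge>1. int s \<le> s_max (e 1) Rinf Rk a \<and> stopped s"
proof (cases "e 1 \<le> Rinf")
  case True
  then have "stopped 1" using stop Rk by auto
  then show ?thesis using True by (intro exI[of _ 1]) (simp add: s_max_def)
next
  case False
  define r where "r = (e 1 - Rinf) / (Rk - Rinf)"
  define K where "K = nat \<lceil>ln r / ln (1 / a)\<rceil>"
  have s_max: "s_max (e 1) Rinf Rk a = int (1 + K)"
    using False by (simp add: s_max_def K_def r_def)
  show ?thesis
  proof (cases "\<exists>t. 1 \<le> t \<and> t \<le> K \<and> stopped t")
    case True
    then show ?thesis using s_max by auto
  next
    case False
    have "e (1 + K) - Rinf \<le> a ^ K * (e 1 - Rinf)"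
      using a False by (intro affine_contraction_iterate contract) auto
    also have "\<dots> = a ^ K * r * (Rk - Rinf)" using Rk by (simp add: r_def)
    also have "\<dots> \<le> Rk - Rinf"
    proof -
      have "ln r / ln (1 / a) \<le> real K" unfolding K_def by linarith
      then have "a ^ K * r \<le> 1"
        using \<open>\<not> e 1 \<le> Rinf\<close> Rk a by (intro power_le_of_log_ratio_le) (auto simp: r_def)
      then show ?thesis using Rk mult_right_mono[of "a ^ K * r" 1 "Rk - Rinf"] by simp
    qed
    finally have "stopped (1 + K)" using stop[of "1 + K"] False by auto
    then show ?thesis using s_max by (intro exI[of _ "1 + K"]) auto
  qed
qed

lemma near_optimal_gam_le:
  assumes stab: "inlier_stable N eps g Iin Iout mug Sig dmu dSig"
    and eps: "0 \<le> eps" "eps < 1/2" and w: "w \<in> capped_simplex {..<N} eps"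
    and near_opt: "gam N g w mu \<le> OPT N eps g mu + dT"
  shows "gam N g w mu \<le> opnorm Sig + dSig + (dmu + norm (mu - mug))\<^sup>2 + dT"
proof -
  have "0 < N" using w by (auto simp: capped_simplex_def intro: Nat.gr0I)
  then show ?thesis using near_opt OPT_le_stability_bound[OF stab eps, of mu] by simp
qed

lemma stopped_mean_error_le:
  fixes g :: "nat \<Rightarrow> real^'p"
  assumes stab: "inlier_stable N eps g Iin Iout mug Sig dmu dSig"
    and eps: "0 \<le> eps" "eps < 1/2" and w: "w \<in> capped_simplex {..<N} eps"
    and stopped: "gam N g w mu \<le> C"
  shows "norm ((\<Sum>n<N. w n *\<^sub>R g n) - mug) \<le> dmu + alpha_eps eps * sqrt C"
proof -
  have "alpha_eps eps * sqrt (gam N g w mu) \<le> alpha_eps eps * sqrt C"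
    using stopped eps by (intro mult_left_mono) (auto simp: alpha_eps_def)
  then show ?thesis using weighted_mean_error_le[OF stab eps w, of mu] by linarith
qed

lemma outer_step_contraction:
  fixes g :: "nat \<Rightarrow> real^'p"
  assumes stab: "inlier_stable N eps g Iin Iout mug Sig dmu dSig"
    and eps: "0 < eps" "eps < 1/3" and "0 \<le> dT"
    and w: "w \<in> capped_simplex {..<N} eps" and near_opt: "gam N g w mu \<le> OPT N eps g mu + dT"
  shows "norm ((\<Sum>n<N. w n *\<^sub>R g n) - mug) - R_inf eps dmu (opnorm Sig) dSig dT
      \<le> alpha_eps eps * (norm (mu - mug) - R_inf eps dmu (opnorm Sig) dSig dT)"
proof -
  have dmu: "0 \<le> dmu" and "0 \<le> dSig" using stab by (auto simp: inlier_stable_def)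
  then have noise: "0 \<le> opnorm Sig + dSig + dT" using opnorm_nonneg[of Sig] \<open>0 \<le> dT\<close> by simp
  have "gam N g w mu \<le> opnorm Sig + dSig + dT + (dmu + norm (mu - mug))\<^sup>2"
    using near_optimal_gam_le[OF stab _ _ w near_opt] eps by simp
  then have "norm ((\<Sum>n<N. w n *\<^sub>R g n) - mug)
      \<le> dmu + alpha_eps eps * sqrt (opnorm Sig + dSig + dT + (dmu + norm (mu - mug))\<^sup>2)"
    using stopped_mean_error_le[OF stab _ _ w] eps by simp
  moreover have "dmu + alpha_eps eps * sqrt (opnorm Sig + dSig + dT + (dmu + norm (mu - mug))\<^sup>2)
        - R_inf eps dmu (opnorm Sig) dSig dT
      \<le> alpha_eps eps * (norm (mu - mug) - R_inf eps dmu (opnorm Sig) dSig dT)"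
    using alpha_eps_pos[of eps] alpha_eps_less_1[of eps] eps
    by (intro R_inf_contraction dmu noise) auto
  ultimately show ?thesis by linarith
qed

theorem mainTheorem12:
  fixes g :: "nat \<Rightarrow> real^'p"
    and N T :: nat
    and eps nu dmu dSig Rk Cstop :: real
    and Iin Iout :: "nat set"
    and mug :: "real^'p"
    and Sig :: "real^'p^'p"
    and muhat :: "nat \<Rightarrow> real^'p"
    and wbar :: "nat \<Rightarrow> nat \<Rightarrow> real"
  defines "p \<equiv> CARD('p)"
    and "dT \<equiv> deltaT nu eps CARD('p) T"
    and "Rinf \<equiv> R_inf eps dmu (opnorm Sig) dSig (deltaT nu eps CARD('p) T)"
    and "stopped \<equiv> (\<lambda>s. gam N g (wbar s) (muhat s) \<le> Cstop)"
  assumes N: "N \<ge> 1"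
    and p: "p \<ge> 2"
    and eps: "0 < eps" "eps < 1/3"
    and nu: "nu = (MAX i\<in>{..<N}. MAX j\<in>{..<N}. (norm (g i - g j))\<^sup>2)" "nu > 0"
    and T: "real T \<ge> 4 * max (ln (1 / (1 - eps))) (ln (real p))"
    and stab: "inlier_stable N eps g Iin Iout mug Sig dmu dSig"
    and Rk: "Rk > Rinf"
    and Cstop: "Cstop \<ge> opnorm Sig + dSig + (dmu + Rk)\<^sup>2 + dT"
    and init: "muhat 1 \<in> convex hull (g ` {..<N})"
    and wsel: "\<And>s. s \<ge> 1 \<Longrightarrow> (\<forall>t. 1 \<le> t \<and> t < s \<longrightarrow> \<not> stopped t) \<Longrightarrow>
                 wbar s \<in> capped_simplex {..<N} eps \<and>
                 gam N g (wbar s) (muhat s) \<le> OPT N eps g (muhat s) + dT"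
    and upd: "\<And>s. s \<ge> 1 \<Longrightarrow> (\<forall>t. 1 \<le> t \<and> t \<le> s \<longrightarrow> \<not> stopped t) \<Longrightarrow>
                 muhat (Suc s) = (\<Sum>n<N. wbar s n *\<^sub>R g n)"
  shows "(\<forall>s\<ge>1. (\<forall>t. 1 \<le> t \<and> t < s \<longrightarrow> \<not> stopped t) \<longrightarrow>
            norm (muhat s - mug) \<le> Rk \<longrightarrow> stopped s)
       \<and> (\<exists>s\<ge>1. int s \<le> s_max (norm (muhat 1 - mug)) Rinf Rk (alpha_eps eps) \<and> stopped s)
       \<and> (\<forall>s\<ge>1. (\<forall>t. 1 \<le> t \<and> t < s \<longrightarrow> \<not> stopped t) \<longrightarrow> stopped s \<longrightarrow>
            norm ((\<Sum>n<N. wbar s n *\<^sub>R g n) - mug) \<le> dmu + alpha_eps eps * sqrt Cstop)"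
proof -
  have eps2: "eps < 1/2" using eps by simp
  have al: "0 < alpha_eps eps" "alpha_eps eps < 1" using alpha_eps_pos alpha_eps_less_1 eps by auto
  have dmu: "0 \<le> dmu" using stab by (simp add: inlier_stable_def)
  have "0 \<le> dT" using deltaT_nonneg nu(2) eps p by (simp add: dT_def p_def)
  have stop_near: "stopped s"
    if "1 \<le> s" "\<forall>t. 1 \<le> t \<and> t < s \<longrightarrow> \<not> stopped t" "norm (muhat s - mug) \<le> Rk" for s
  proof -
    have "(dmu + norm (muhat s - mug))\<^sup>2 \<le> (dmu + Rk)\<^sup>2"
      using that(3) dmu by (intro power_mono) auto
    then show ?thesis
      using near_optimal_gam_le[OF stab _ eps2] wsel[OF that(1,2)] eps Cstop
      by (force simp: stopped_def)
  qed
  have contract: "norm (muhat (Suc s) - mug) - Rinf \<le> alpha_eps eps * (norm (muhat s - mug) - Rinf)"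
    if "1 \<le> s" "\<forall>t. 1 \<le> t \<and> t \<le> s \<longrightarrow> \<not> stopped t" for s
    using outer_step_contraction[OF stab eps \<open>0 \<le> dT\<close>] wsel[OF that(1)] upd[OF that] that(2)
    by (simp add: Rinf_def dT_def)
  have "norm ((\<Sum>n<N. wbar s n *\<^sub>R g n) - mug) \<le> dmu + alpha_eps eps * sqrt Cstop"
    if "1 \<le> s" "\<forall>t. 1 \<le> t \<and> t < s \<longrightarrow> \<not> stopped t" "stopped s" for s
    using stopped_mean_error_le[OF stab _ eps2] wsel[OF that(1,2)] that(3) eps
    by (simp add: stopped_def)
  then show ?thesis
    using stop_near contract stopping_time_le_s_max[OF al Rk, where e = "\<lambda>s. norm (muhat s - mug)"]
    by auto
qed

end
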